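(* Let $n\ge2$ and let $S=S_1S_2\cdots$ be as defined in the context. Suppose $\mathrm{PPM}^*$ has already processed $S_1\cdots S_{n-1}$. Then once it has processed the first $2^n+n$ bits of $S_n$ (i.e. $S_n[0..2^n+n-1]$), its model contains a context for every $w\in\{0,1\}^n$.
   Context: Strings are indexed from $0$; $x[i..j]$ is the substring from position $i$ to $j$; $x^j$ is $j$-fold concatenation. de Bruijn strings: for $n\ge1$, a de Bruijn string of order $n$ is a binary string $x$ of length $2^n$ such that every $w\in\{0,1\}^n$ occurs exactly once as a substring of $x\cdot x[0..n-2]$. $db(n)$ is the lexicographically least one, produced by Martin's algorithm: start with $x=1^{n-1}$; while possible, append a bit (preferring $0$ over $1$) so that all length-$n$ substrings of $x$ remain distinct; then delete the prefix $1^{n-1}$. For $0\le i<2^n$, $db_i(n)=db(n)[i..2^n-1]\cdot db(n)[0..i-1]$. The sequence $S$: for $n\ge1$ write $n=2^st$ with $t$ odd, let $B_{n,i}=db_i(n)^t$ for $0\le i<2^s$, $S_n=B_{n,0}B_{n,1}\cdots B_{n,2^s-1}$, and $S=S_1S_2\cdots$. The $\mathrm{PPM}^*$ model after reading a prefix $x$: each stored context $c$ records, for each bit $b$, the number of occurrences of $cb$ in $x$. The stored contexts are the empty context and, whenever a string $w$ occurs at least twice as a substring of $x$, the contexts $wb$ for each bit $b$ such that $wb$ occurs in $x$ followed by a further bit (a context is only created once a bit following it has been seen, so that it has a prediction). The model is updated after each bit read. *)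

theory Defs
  imports "HOL-Computational_Algebra.Primes"
begin

(* Binary strings are bool lists; False = bit 0, True = bit 1. *)

definition windows :: "nat \<Rightarrow> bool list \<Rightarrow> bool list list" where
  "windows n y = map (\<lambda>i. take n (drop i y)) [0..<Suc (length y) - n]"

definition all_distinct_windows :: "nat \<Rightarrow> bool list \<Rightarrow> bool" where
  "all_distinct_windows n y = distinct (windows n y)"

definition martin_step :: "nat \<Rightarrow> bool list \<Rightarrow> bool list" where
  "martin_step n x =
     (if all_distinct_windows n (x @ [False]) then x @ [False]
      else if all_distinct_windows n (x @ [True]) then x @ [True]
      else x)"

(* Every append creates a new distinct
   length-n substring, so at most 2^n appends are possible; hence after 2^n
   iterations of martin_step the algorithm has stopped (fixed point reached). *)
definition martin :: "nat \<Rightarrow> bool list" where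
  "martin n = (martin_step n ^^ (2 ^ n)) (replicate (n - 1) True)"

definition db :: "nat \<Rightarrow> bool list" where
  "db n = drop (n - 1) (martin n)"

definition db_rot :: "nat \<Rightarrow> nat \<Rightarrow> bool list" where
  "db_rot n i = drop i (db n) @ take i (db n)"

definition two_exp :: "nat \<Rightarrow> nat" where
  "two_exp n = multiplicity (2::nat) n"

definition odd_part :: "nat \<Rightarrow> nat" where
  "odd_part n = n div 2 ^ two_exp n"

definition B_blk :: "nat \<Rightarrow> nat \<Rightarrow> bool list" where
  "B_blk n i = concat (replicate (odd_part n) (db_rot n i))"

definition S_blk :: "nat \<Rightarrow> bool list" where
  "S_blk n = concat (map (B_blk n) [0..<2 ^ two_exp n])"

definition S_prefix :: "nat \<Rightarrow> bool list" where
  "S_prefix n = concat (map S_blk [1..<n])"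

definition occurrences :: "bool list \<Rightarrow> bool list \<Rightarrow> nat set" where
  "occurrences w x = {i. i + length w \<le> length x \<and> take (length w) (drop i x) = w}"

definition occurs :: "bool list \<Rightarrow> bool list \<Rightarrow> bool" where
  "occurs w x \<longleftrightarrow> occurrences w x \<noteq> {}"

definition ppm_contexts :: "bool list \<Rightarrow> bool list set" where
  "ppm_contexts x = {[]} \<union>
     {w @ [b] | w b. card (occurrences w x) \<ge> 2 \<and> (\<exists>c. occurs (w @ [b, c]) x)}"

end

theory Submission
  imports Defs
begin

text \<open>
Martin's algorithm produces \<open>M = 1\<^bsup>n-1\<^esup> db(n)\<close> whose length-\<open>n\<close> windows are pairwise distinct,
and in which a window ending in \<open>1\<close> is always preceded by the same window ending in \<open>0\<close>.
Distinct windows mean that the positive occurrences of a word \<open>u\<close> of length \<open>n - 1\<close> have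
distinct predecessor bits: there are at most two of them, and if there are two then both
\<open>0u\<close> and \<open>1u\<close> occur. When the algorithm stops, the final \<open>(n - 1)\<close>-suffix \<open>e\<close> of \<open>M\<close> is right
special (\<open>e0\<close> and \<open>e1\<close> occur); counting occurrences forces \<open>e = 1\<^bsup>n-1\<^esup>\<close>, and right speciality
then spreads from \<open>u1\<close> to \<open>cu\<close>. Hence every word of length \<open>n\<close> occurs in \<open>M\<close>: \<open>db(n)\<close> is a
de Bruijn string, it starts with \<open>0\<^bsup>n\<^esup>\<close> and ends with \<open>1\<^bsup>n-1\<^esup>\<close>.

The first \<open>2\<^bsup>n\<^esup> + n - 1\<close> bits of \<open>S\<^sub>n\<close> are \<open>db(n)\<close> followed by its first \<open>n - 1\<close> bits
(the next block is \<open>db(n)\<close> or \<open>db\<^sub>1(n)\<close>, which agree there because of the leading zeros),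
so every word \<open>w\<close> of length \<open>n - 1\<close> is right special in them. Then \<open>w\<close> occurs twice and each
\<open>wb\<close> occurs followed by one more bit, which is what \<open>PPM\<^sup>*\<close> needs to store the context \<open>wb\<close>.
\<close>

lemma occurrences_append_left: "p \<in> occurrences w y \<Longrightarrow> length x + p \<in> occurrences w (x @ y)"
  by (simp add: occurrences_def)

lemma occurrences_append_right: "p \<in> occurrences w x \<Longrightarrow> p \<in> occurrences w (x @ y)"
  by (simp add: occurrences_def)

lemma occurrences_append_prefix:
  assumes "p \<in> occurrences (u @ v) x"
  shows "p \<in> occurrences u x"
proof -
  have "take (length u) (take (length (u @ v)) (drop p x)) = u"
    using assms by (simp add: occurrences_def)
  then show ?thesis using assms by (simp add: occurrences_def)
qed

lemma occurrences_snoc_nth: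
  assumes "p \<in> occurrences w x" "p + length w < length x"
  shows "p \<in> occurrences (w @ [x ! (p + length w)]) x"
  using assms by (simp add: occurrences_def take_Suc_conv_app_nth)

lemma occurrences_Cons_nth:
  assumes "p \<in> occurrences w x" "0 < p"
  shows "p - 1 \<in> occurrences (x ! (p - 1) # w) x"
proof -
  have "p - 1 < length x"
    using assms by (auto simp: occurrences_def)
  then have "drop (p - 1) x = x ! (p - 1) # drop p x"
    using Cons_nth_drop_Suc assms(2) by fastforce
  then show ?thesis using assms by (simp add: occurrences_def)
qed

lemma finite_occurrences: "finite (occurrences w x)"
  by (rule finite_subset[of _ "{..length x}"]) (auto simp: occurrences_def)

lemma occurrences_same_length_eq:
  "p \<in> occurrences u y \<Longrightarrow> p \<in> occurrences v y \<Longrightarrow> length u = length v \<Longrightarrow> u = v"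
  by (simp add: occurrences_def)

lemma all_distinct_windows_iff:
  "all_distinct_windows n y \<longleftrightarrow> (\<forall>i j. i + n \<le> length y \<longrightarrow> j + n \<le> length y \<longrightarrow>
     take n (drop i y) = take n (drop j y) \<longrightarrow> i = j)"
  unfolding all_distinct_windows_def windows_def distinct_map inj_on_def
  by (auto simp: less_diff_conv)

lemma all_distinct_windows_occurrences_unique:
  assumes "all_distinct_windows (length w) y" "p \<in> occurrences w y" "q \<in> occurrences w y"
  shows "p = q"
  using assms unfolding all_distinct_windows_iff occurrences_def by auto

lemma occurs_in_set_windows:
  assumes "occurs v y"
  shows "v \<in> set (windows (length v) y)"
proof -
  obtain p where p: "p + length v \<le> length y" "take (length v) (drop p y) = v"
    using assms by (auto simp: occurs_def occurrences_def)
  then have "p \<in> {0..<Suc (length y) - length v}" by simp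
  then show ?thesis
    using p(2) unfolding windows_def by (auto intro!: image_eqI)
qed

lemma card_set_windows_le: "card (set (windows n y)) \<le> 2 ^ n"
proof -
  have "set (windows n y) \<subseteq> {xs. length xs = n}"
    by (auto simp: windows_def)
  then have "card (set (windows n y)) \<le> card {xs :: bool list. length xs = n}"
    using finite_lists_length_eq[of "UNIV :: bool set" n] by (intro card_mono) auto
  also have "\<dots> = 2 ^ n"
    using card_lists_length_eq[of "UNIV :: bool set" n] by simp
  finally show ?thesis .
qed

lemma card_set_windows:
  assumes "all_distinct_windows n y"
  shows "card (set (windows n y)) = Suc (length y) - n"
proof -
  have "card (set (windows n y)) = length (windows n y)"
    using assms distinct_card unfolding all_distinct_windows_def by blast
  then show ?thesis by (simp add: windows_def)
qed

lemma length_le_if_all_distinct_windows: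
  "all_distinct_windows n y \<Longrightarrow> Suc (length y) - n \<le> 2 ^ n"
  using card_set_windows card_set_windows_le by metis

lemma occurs_suffix_snoc_if_not_all_distinct_windows:
  assumes "0 < n" "n - 1 \<le> length y" "all_distinct_windows n y"
    and "\<not> all_distinct_windows n (y @ [b])"
  shows "occurs (drop (length y - (n - 1)) y @ [b]) y"
proof -
  from assms(4) obtain i j where ij: "i + n \<le> Suc (length y)" "j + n \<le> Suc (length y)"
    "take n (drop i (y @ [b])) = take n (drop j (y @ [b]))" "i \<noteq> j"
    unfolding all_distinct_windows_iff by auto
  have last: "take n (drop k (y @ [b])) = drop (length y - (n - 1)) y @ [b]"
    if "k + n = Suc (length y)" for k
  proof -
    have "k = length y - (n - 1)" using that assms(1) by linarith
    then show ?thesis using that by simp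
  qed
  have old: "take n (drop k (y @ [b])) = take n (drop k y)" if "k + n \<le> length y" for k
    using that by simp
  consider "i + n \<le> length y" "j + n \<le> length y" | "i + n = Suc (length y)" "j + n \<le> length y"
    | "j + n = Suc (length y)" "i + n \<le> length y"
    using ij by linarith
  then show ?thesis
  proof cases
    case 1
    then show ?thesis using ij assms(3) old unfolding all_distinct_windows_iff by metis
  next
    case 2
    then have "j \<in> occurrences (drop (length y - (n - 1)) y @ [b]) y"
      using ij(3) last[OF 2(1)] old[OF 2(2)] assms(1) by (simp add: occurrences_def)
    then show ?thesis unfolding occurs_def by blast
  next
    case 3
    then have "i \<in> occurrences (drop (length y - (n - 1)) y @ [b]) y"
      using ij(3) last[OF 3(1)] old[OF 3(2)] assms(1) by (simp add: occurrences_def)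
    then show ?thesis unfolding occurs_def by blast
  qed
qed

lemma predecessor_bit_inj:
  assumes "all_distinct_windows (Suc (length u)) y"
    and "p \<in> occurrences u y" "q \<in> occurrences u y" "0 < p" "0 < q"
    and "y ! (p - 1) = y ! (q - 1)"
  shows "p = q"
proof -
  have "p - 1 \<in> occurrences (y ! (q - 1) # u) y" "q - 1 \<in> occurrences (y ! (q - 1) # u) y"
    using occurrences_Cons_nth[OF assms(2,4)] occurrences_Cons_nth[OF assms(3,5)] assms(6) by simp_all
  then have "p - 1 = q - 1"
    using assms(1) by (intro all_distinct_windows_occurrences_unique) simp_all
  then show ?thesis using assms(4,5) by simp
qed

lemma not_three_positive_occurrences:
  assumes "all_distinct_windows (Suc (length u)) y"
    and "p \<in> occurrences u y" "q \<in> occurrences u y" "r \<in> occurrences u y"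
    and "0 < p" "0 < q" "0 < r"
  shows "p = q \<or> p = r \<or> q = r"
proof -
  have "y ! (p - 1) = y ! (q - 1) \<or> y ! (p - 1) = y ! (r - 1) \<or> y ! (q - 1) = y ! (r - 1)"
    by blast
  then show ?thesis using predecessor_bit_inj[OF assms(1)] assms(2-) by metis
qed

lemma occurs_Cons_if_two_positive_occurrences:
  assumes "all_distinct_windows (Suc (length u)) y"
    and "p \<in> occurrences u y" "q \<in> occurrences u y" "0 < p" "0 < q" "p \<noteq> q"
  shows "occurs (c # u) y"
proof -
  have "y ! (p - 1) \<noteq> y ! (q - 1)"
    using predecessor_bit_inj[OF assms(1-5)] assms(6) by blast
  then have "c = y ! (p - 1) \<or> c = y ! (q - 1)" by blast
  then show ?thesis
    using occurrences_Cons_nth[OF assms(2,4)] occurrences_Cons_nth[OF assms(3,5)]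
    unfolding occurs_def by blast
qed

lemma occurs_cyclic_shift:
  assumes "occurs v (e @ d @ e)" "length v \<le> Suc (length e)"
  shows "occurs v (d @ e @ take (length e) (d @ e))"
proof -
  obtain q where q: "q \<in> occurrences v (e @ d @ e)"
    using assms(1) unfolding occurs_def by blast
  show ?thesis
  proof (cases "length e \<le> q")
    case True
    then have "q - length e \<in> occurrences v (d @ e)"
      using q by (auto simp: occurrences_def)
    then show ?thesis
      unfolding occurs_def using occurrences_append_right[of _ v "d @ e"] by fastforce
  next
    case False
    have "length v - (length e - q) \<le> length e"
      using assms(2) False by linarith
    then have "take (length v - (length e - q)) (d @ e)
        = take (length v - (length e - q)) (take (length e) (d @ e))"
      by (metis min_absorb1 take_take)
    then have "take (length v) (drop q (e @ (d @ e)))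
        = take (length v) (drop q (e @ take (length e) (d @ e)))"
      using False by simp
    then have "q \<in> occurrences v (e @ take (length e) (d @ e))"
      using q False assms(2) by (auto simp: occurrences_def)
    then show ?thesis
      unfolding occurs_def using occurrences_append_left[of q v _ d] by fastforce
  qed
qed

definition right_special :: "bool list \<Rightarrow> bool list \<Rightarrow> bool" where
  "right_special u y \<longleftrightarrow> (\<forall>b. occurs (u @ [b]) y)"

lemma right_special_occurrences:
  assumes "right_special u y"
  obtains p q where "p \<noteq> q" "p \<in> occurrences u y" "q \<in> occurrences u y"
    "p + length u < length y" "q + length u < length y"
proof -
  obtain p q where p: "p \<in> occurrences (u @ [False]) y" and q: "q \<in> occurrences (u @ [True]) y"
    using assms unfolding right_special_def occurs_def by blast
  have "p \<noteq> q"
    using occurrences_same_length_eq[OF p] q by force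
  moreover have "p + length u < length y" "q + length u < length y"
    using p q by (auto simp: occurrences_def)
  ultimately show thesis
    using that occurrences_append_prefix[OF p] occurrences_append_prefix[OF q] by blast
qed

text \<open>Invariant of Martin's algorithm: it appends a \<open>1\<close> only when appending \<open>0\<close> would repeat
  a window, i.e.\ when the window ending in \<open>0\<close> has already occurred.\<close>

definition zero_preferred :: "nat \<Rightarrow> bool list \<Rightarrow> bool" where
  "zero_preferred n y \<longleftrightarrow> (\<forall>j. j + n \<le> length y \<longrightarrow> y ! (j + n - 1) \<longrightarrow>
     (\<exists>j' < j. j' \<in> occurrences (take (n - 1) (drop j y) @ [False]) y))"

lemma zero_preferred_snoc:
  assumes "0 < n" "n - 1 \<le> length y" "all_distinct_windows n y" "zero_preferred n y"
    and "b \<Longrightarrow> \<not> all_distinct_windows n (y @ [False])"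
  shows "zero_preferred n (y @ [b])"
  unfolding zero_preferred_def
proof (intro allI impI)
  fix j
  assume j: "j + n \<le> length (y @ [b])" "(y @ [b]) ! (j + n - 1)"
  show "\<exists>j' < j. j' \<in> occurrences (take (n - 1) (drop j (y @ [b])) @ [False]) (y @ [b])"
  proof (cases "j + n \<le> length y")
    case True
    then have "y ! (j + n - 1)" using j assms(1) by (simp add: nth_append)
    with True assms(4) obtain j' where "j' < j" "j' \<in> occurrences (take (n - 1) (drop j y) @ [False]) y"
      unfolding zero_preferred_def by blast
    then show ?thesis using True by (auto intro: occurrences_append_right)
  next
    case False
    then have j_last: "j = length y - (n - 1)" "j + n = Suc (length y)" using j(1) assms(1,2) by auto
    then have b using j(2) assms(1) by (simp add: nth_append)
    then obtain j' where "j' \<in> occurrences (drop j y @ [False]) y"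
      using occurs_suffix_snoc_if_not_all_distinct_windows[OF assms(1-3)] assms(5) j_last(1)
      unfolding occurs_def by blast
    moreover from this have "j' < j"
      using j_last by (auto simp: occurrences_def)
    ultimately show ?thesis using j_last by (auto intro: occurrences_append_right)
  qed
qed

lemma zero_preferred_window:
  assumes "zero_preferred n y" "0 < n" "j + n \<le> length y" "y ! (j + n - 1)"
  obtains j' where "j' < j" "take n (drop j' y) = take (n - 1) (drop j y) @ [False]"
proof -
  obtain j' where j': "j' < j" "j' \<in> occurrences (take (n - 1) (drop j y) @ [False]) y"
    using assms(1,3,4) unfolding zero_preferred_def by blast
  have "length (take (n - 1) (drop j y) @ [False]) = n"
    using assms(2,3) by simp
  moreover have "take (length (take (n - 1) (drop j y) @ [False])) (drop j' y)
      = take (n - 1) (drop j y) @ [False]"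
    using j'(2) unfolding occurrences_def by blast
  ultimately have "take n (drop j' y) = take (n - 1) (drop j y) @ [False]"
    by argo
  with j'(1) show thesis by (rule that)
qed

lemma zero_preferred_start:
  assumes "zero_preferred n y" "take (n - 1) y = replicate (n - 1) True"
    and "i < n" "i + n \<le> length y"
  shows "\<not> y ! (i + n - 1)"
proof
  have y_start: "y ! k" if "k < n - 1" for k
    using that assms(2) nth_take[OF that, of y] by simp
  have first: "\<not> y ! (n - 1)"
  proof
    assume "y ! (n - 1)"
    then obtain j' where "j' < (0::nat)"
      using zero_preferred_window[OF assms(1), of 0] assms(3,4) by auto
    then show False by simp
  qed
  assume "y ! (i + n - 1)"
  then obtain j' where j': "j' < i" "take n (drop j' y) = take (n - 1) (drop i y) @ [False]"
    using zero_preferred_window[OF assms(1), of i] assms(3,4) by auto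
  let ?k = "n - 1 - i"
  have "(take (n - 1) (drop i y) @ [False]) ! ?k = take n (drop j' y) ! ?k"
    using j'(2) by simp
  also have "\<dots> = y ! (j' + ?k)"
    using j'(1) assms(3,4) by simp
  finally have "(take (n - 1) (drop i y) @ [False]) ! ?k"
    using y_start[of "j' + ?k"] j'(1) assms(3) by simp
  moreover have "(take (n - 1) (drop i y) @ [False]) ! ?k = y ! (n - 1)"
  proof -
    have "?k < n - 1" "i + ?k = n - 1" using j'(1) assms(3) by auto
    then show ?thesis using assms(4) by (simp add: nth_append)
  qed
  ultimately show False using first by simp
qed

lemma martin_step_cases:
  obtains "martin_step n y = y" "\<And>b. \<not> all_distinct_windows n (y @ [b])"
  | b where "martin_step n y = y @ [b]" "all_distinct_windows n (y @ [b])"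
      "b \<Longrightarrow> \<not> all_distinct_windows n (y @ [False])"
proof -
  consider "all_distinct_windows n (y @ [False])"
    | "\<not> all_distinct_windows n (y @ [False])" "all_distinct_windows n (y @ [True])"
    | "\<And>b. \<not> all_distinct_windows n (y @ [b])"
    by (metis (full_types))
  then show thesis
    using that unfolding martin_step_def by cases auto
qed

abbreviation martin_iter :: "nat \<Rightarrow> nat \<Rightarrow> bool list" where
  "martin_iter n k \<equiv> (martin_step n ^^ k) (replicate (n - 1) True)"

lemma martin_iter_invariant:
  assumes "0 < n"
  shows "\<exists>z. martin_iter n k = replicate (n - 1) True @ z \<and>
    all_distinct_windows n (martin_iter n k) \<and> zero_preferred n (martin_iter n k)"
proof (induction k)
  case 0
  have "all_distinct_windows n (replicate (n - 1) True)"
    using assms by (simp add: all_distinct_windows_def windows_def)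
  moreover have "zero_preferred n (replicate (n - 1) True)"
    using assms unfolding zero_preferred_def by auto
  ultimately show ?case by simp
next
  case (Suc k)
  then obtain z where z: "martin_iter n k = replicate (n - 1) True @ z"
    and inv: "all_distinct_windows n (martin_iter n k)" "zero_preferred n (martin_iter n k)"
    by blast
  then have len: "n - 1 \<le> length (martin_iter n k)" by simp
  show ?case
  proof (cases rule: martin_step_cases[of n "martin_iter n k"])
    case 1
    then show ?thesis using Suc by simp
  next
    case (2 b)
    then show ?thesis
      using zero_preferred_snoc[OF assms len inv] z by auto
  qed
qed

lemma martin_iter_stops_or_grows:
  "martin_step n (martin_iter n k) = martin_iter n k \<or> length (martin_iter n k) = n - 1 + k"
proof (induction k)
  case (Suc k)
  then show ?case
    by (cases rule: martin_step_cases[of n "martin_iter n k"]) auto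
qed simp

lemma martin_maximal:
  assumes "0 < n"
  shows "\<not> all_distinct_windows n (martin n @ [b])"
proof (cases rule: martin_step_cases[of n "martin n"])
  case 1
  then show ?thesis by blast
next
  case (2 c)
  then have "length (martin n) = n - 1 + 2 ^ n"
    using martin_iter_stops_or_grows[of n "2 ^ n"] unfolding martin_def by auto
  then show ?thesis
    using length_le_if_all_distinct_windows[OF 2(2)] assms by simp
qed

context
  fixes n :: nat
  assumes n_pos: "0 < n"
begin

lemma martin_eq_replicate_db: "martin n = replicate (n - 1) True @ db n"
proof -
  obtain z where "martin n = replicate (n - 1) True @ z"
    using martin_iter_invariant[OF n_pos] unfolding martin_def by blast
  then show ?thesis by (simp add: db_def)
qed

lemma martin_all_distinct_windows: "all_distinct_windows n (martin n)"
  and martin_zero_preferred: "zero_preferred n (martin n)"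
  using martin_iter_invariant[OF n_pos] unfolding martin_def by blast+

lemma occurrence_martin_pos:
  assumes "p \<in> occurrences u (martin n)" "length u = n - 1" "u \<noteq> replicate (n - 1) True"
  shows "0 < p"
  using assms martin_eq_replicate_db by (auto simp: occurrences_def intro: gr0I)

lemma right_special_martin_suffix:
  "right_special (drop (length (martin n) - (n - 1)) (martin n)) (martin n)"
  using occurs_suffix_snoc_if_not_all_distinct_windows[OF n_pos _ martin_all_distinct_windows
      martin_maximal[OF n_pos]] martin_eq_replicate_db
  unfolding right_special_def by simp

lemma martin_suffix: "drop (length (martin n) - (n - 1)) (martin n) = replicate (n - 1) True"
  (is "?e = _")
proof (rule ccontr)
  assume ne: "?e \<noteq> replicate (n - 1) True"
  let ?L = "length (martin n) - (n - 1)"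
  have len_e: "length ?e = n - 1"
    using martin_eq_replicate_db by simp
  obtain p q where pq: "p \<noteq> q" "p \<in> occurrences ?e (martin n)" "q \<in> occurrences ?e (martin n)"
    "p < ?L" "q < ?L"
    using right_special_occurrences[OF right_special_martin_suffix] len_e by (metis less_diff_conv)
  have "?L \<in> occurrences ?e (martin n)"
    using len_e by (simp add: occurrences_def)
  moreover have "0 < p" "0 < q"
    using occurrence_martin_pos[OF _ len_e ne] pq by auto
  moreover have "0 < ?L" using pq by simp
  ultimately show False
    using not_three_positive_occurrences[of ?e "martin n" p q ?L] pq martin_all_distinct_windows
      len_e n_pos by simp
qed

lemma two_positive_occurrences_if_right_special:
  assumes "right_special u (martin n)" "length u = n - 1"
  obtains p q where "p \<noteq> q" "0 < p" "0 < q"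
    "p \<in> occurrences u (martin n)" "q \<in> occurrences u (martin n)"
proof -
  let ?L = "length (martin n) - (n - 1)"
  obtain p q where pq: "p \<noteq> q" "p \<in> occurrences u (martin n)" "q \<in> occurrences u (martin n)"
    "p < ?L" "q < ?L"
    using right_special_occurrences[OF assms(1)] assms(2) by (metis less_diff_conv)
  show thesis
  proof (cases "u = replicate (n - 1) True")
    case True
    then have "?L \<in> occurrences u (martin n)"
      using martin_suffix assms(2) martin_eq_replicate_db by (simp add: occurrences_def)
    moreover have "0 < p \<or> 0 < q" using pq(1) by auto
    ultimately show thesis
      using that pq by (metis less_nat_zero_code nat_neq_iff not_gr_zero)
  next
    case False
    then show thesis
      using that pq occurrence_martin_pos[OF _ assms(2) False] by blast
  qed
qed

lemma right_special_Cons: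
  assumes "right_special (u @ [True]) (martin n)" "length (u @ [True]) = n - 1"
  shows "right_special (c # u) (martin n)"
proof -
  obtain p q where pq: "p \<noteq> q" "0 < p" "0 < q"
    "p \<in> occurrences (u @ [True]) (martin n)" "q \<in> occurrences (u @ [True]) (martin n)"
    using two_positive_occurrences_if_right_special[OF assms] by blast
  have "Suc (length (u @ [True])) = n" using assms(2) n_pos by simp
  then have "occurs (c # u @ [True]) (martin n)"
    using occurs_Cons_if_two_positive_occurrences[OF _ pq(4,5,2,3,1)] martin_all_distinct_windows
    by simp
  then obtain j where j: "j \<in> occurrences ((c # u) @ [True]) (martin n)"
    unfolding occurs_def by auto
  have len: "length (c # u) = n - 1" using assms(2) by simp
  then have window: "j + n \<le> length (martin n)" "take n (drop j (martin n)) = (c # u) @ [True]"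
    using j n_pos by (auto simp: occurrences_def)
  have "martin n ! (j + n - 1) = take n (drop j (martin n)) ! (n - 1)"
    using window(1) n_pos by simp
  also have "\<dots> = ((c # u) @ [True]) ! length (c # u)"
    using window(2) len by simp
  finally have "martin n ! (j + n - 1)"
    by simp
  moreover have "take (n - 1) (drop j (martin n)) = c # u"
  proof -
    have "take (n - 1) (drop j (martin n)) = take (length (c # u)) (take n (drop j (martin n)))"
      using len by simp
    also have "\<dots> = c # u"
      using window(2) by simp
    finally show ?thesis .
  qed
  ultimately obtain j' where "j' \<in> occurrences ((c # u) @ [False]) (martin n)"
    using martin_zero_preferred window(1) unfolding zero_preferred_def by metis
  then have "occurs ((c # u) @ [b]) (martin n)" for b
    using j unfolding occurs_def by (cases b) auto
  then show ?thesis
    unfolding right_special_def by blast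
qed

lemma right_special_martin_padded:
  "length z \<le> n - 1 \<Longrightarrow> right_special (z @ replicate (n - 1 - length z) True) (martin n)"
proof (induction z)
  case Nil
  then show ?case
    using right_special_martin_suffix martin_suffix by simp
next
  case (Cons c z)
  then have "n - 1 - length z = Suc (n - 1 - length (c # z))"
    by simp
  then have "replicate (n - 1 - length z) True = replicate (n - 1 - length (c # z)) True @ [True]"
    by (metis replicate_Suc replicate_append_same)
  then show ?case
    using Cons right_special_Cons[of "z @ replicate (n - 1 - length (c # z)) True" c] by simp
qed

lemma martin_complete:
  assumes "length v = n"
  shows "occurs v (martin n)"
proof -
  have "v = butlast v @ [last v]"
    using assms n_pos by (metis append_butlast_last_id less_not_refl list.size(3))
  moreover have "right_special (butlast v) (martin n)"
    using right_special_martin_padded[of "butlast v"] assms by simp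
  ultimately show ?thesis
    unfolding right_special_def by metis
qed

lemma length_martin: "length (martin n) = 2 ^ n + n - 1"
proof -
  have "{xs. length xs = n} \<subseteq> set (windows n (martin n))"
    using martin_complete occurs_in_set_windows by fastforce
  then have "2 ^ n \<le> card (set (windows n (martin n)))"
    using card_lists_length_eq[of "UNIV :: bool set" n] card_mono[OF List.finite_set] by fastforce
  moreover have "n - 1 \<le> length (martin n)"
    using martin_eq_replicate_db by simp
  ultimately show ?thesis
    using card_set_windows[OF martin_all_distinct_windows]
      card_set_windows_le[of n "martin n"] n_pos by linarith
qed

lemma length_db: "length (db n) = 2 ^ n"
  using length_martin martin_eq_replicate_db n_pos by simp

lemma db_ends_replicate_True: "\<exists>d. db n = d @ replicate (n - 1) True"
proof -
  have "drop (length (db n) - (n - 1)) (db n) = replicate (n - 1) True"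
    using martin_suffix martin_eq_replicate_db length_db less_exp[of n]
    by simp
  then show ?thesis by (metis append_take_drop_id)
qed

lemma db_cyclic_complete:
  assumes "length v = n"
  shows "occurs v (db n @ take (n - 1) (db n))"
proof -
  obtain d where d: "db n = d @ replicate (n - 1) True"
    using db_ends_replicate_True by blast
  have "occurs v (replicate (n - 1) True @ d @ replicate (n - 1) True)"
    using martin_complete[OF assms] martin_eq_replicate_db d by simp
  from occurs_cyclic_shift[OF this] show ?thesis
    using assms d by simp
qed

lemma db_starts_replicate_False: "take n (db n) = replicate n False"
proof (rule nth_equalityI)
  show "length (take n (db n)) = length (replicate n False)"
    using length_db less_exp[of n] by simp
  fix i assume "i < length (take n (db n))"
  then have "i < n" by simp
  moreover from this have "i + n \<le> length (martin n)"
    using length_martin less_exp[of n] by linarith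
  moreover have "take (n - 1) (martin n) = replicate (n - 1) True"
    using martin_eq_replicate_db by (metis append_eq_conv_conj length_replicate)
  ultimately have "\<not> martin n ! (i + n - 1)"
    using zero_preferred_start martin_zero_preferred by blast
  moreover have "martin n ! (i + n - 1) = db n ! i"
  proof -
    have "\<not> i + n - 1 < n - 1" "i + n - 1 - (n - 1) = i" using n_pos by auto
    then show ?thesis by (subst martin_eq_replicate_db) (simp add: nth_append)
  qed
  ultimately show "take n (db n) ! i = replicate n False ! i"
    using \<open>i < n\<close> by simp
qed

lemma take_db_rot_1: "take (n - 1) (db_rot n 1) = take (n - 1) (db n)"
proof -
  have len: "n - 1 \<le> length (drop 1 (db n))"
    using length_db less_exp[of n] by (simp only: length_drop)
  have "take (n - 1) (db_rot n 1) = take (n - 1) (drop 1 (db n))"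
    using len by (simp add: db_rot_def)
  also have "\<dots> = drop 1 (take n (db n))"
    using n_pos by (simp add: take_drop)
  also have "\<dots> = take (n - 1) (take n (db n))"
    using db_starts_replicate_False by simp
  finally show ?thesis by simp
qed

end

lemma two_exp_times_odd_part: "n = 2 ^ two_exp n * odd_part n"
  unfolding odd_part_def two_exp_def using multiplicity_dvd[of 2 n] by simp

lemma S_blk_second_block:
  assumes "2 \<le> n"
  obtains E rest where "S_blk n = db n @ E @ rest" "n \<le> length E"
    "take (n - 1) E = take (n - 1) (db n)"
proof -
  let ?s = "two_exp n" and ?t = "odd_part n"
  have n_eq: "n = 2 ^ ?s * ?t"
    by (rule two_exp_times_odd_part)
  have len_db: "n \<le> length (db n)"
    using length_db[of n] assms less_exp[of n] by simp
  have S: "S_blk n = B_blk n 0 @ concat (map (B_blk n) [1..<2 ^ ?s])"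
    unfolding S_blk_def by (simp add: upt_conv_Cons)
  have rot_0: "db_rot n 0 = db n" unfolding db_rot_def by simp
  show thesis
  proof (cases "?t = 1")
    case True
    have "?s \<noteq> 0"
    proof
      assume "?s = 0"
      then have "n = 1" using n_eq True by simp
      then show False using assms by simp
    qed
    then have "1 < (2::nat) ^ ?s"
      using one_less_power[of "2::nat" ?s] by simp
    then have "S_blk n = db n @ db_rot n 1 @ concat (map (B_blk n) [Suc 1..<2 ^ ?s])"
      using S True rot_0 by (simp add: B_blk_def upt_conv_Cons)
    moreover have "length (db_rot n 1) = length (db n)"
      by (simp add: db_rot_def)
    ultimately show thesis
      using that take_db_rot_1[of n] len_db assms by simp
  next
    case False
    then have "?t = Suc (Suc (?t - 2))"
      using n_eq assms by (cases ?t) auto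
    then have "B_blk n 0 = concat (replicate (Suc (Suc (?t - 2))) (db n))"
      unfolding B_blk_def rot_0 by argo
    then have "B_blk n 0 = db n @ db n @ concat (replicate (?t - 2) (db n))"
      by simp
    then show thesis
      using that S len_db by simp
  qed
qed

lemma take_S_blk:
  assumes "2 \<le> n"
  obtains c where "take (2 ^ n + n) (S_blk n) = db n @ take (n - 1) (db n) @ [c]"
proof -
  obtain E rest where E: "S_blk n = db n @ E @ rest" "n \<le> length E"
    "take (n - 1) E = take (n - 1) (db n)"
    using S_blk_second_block[OF assms] by blast
  have "take n E = take (Suc (n - 1)) E"
    using assms by simp
  also have "\<dots> = take (n - 1) E @ [E ! (n - 1)]"
    using E(2) assms by (intro take_Suc_conv_app_nth) simp
  finally have "take n E = take (n - 1) E @ [E ! (n - 1)]" .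
  then have "take (2 ^ n + n) (S_blk n) = db n @ take (n - 1) (db n) @ [E ! (n - 1)]"
    using E length_db[of n] assms by simp
  then show thesis by (rule that)
qed

lemma right_special_ppm_contexts:
  assumes "right_special w y"
  shows "w @ [b] \<in> ppm_contexts (x @ y @ [d])"
proof -
  let ?z = "x @ y @ [d]"
  obtain p q where pq: "p \<noteq> q" "p \<in> occurrences w y" "q \<in> occurrences w y"
    using right_special_occurrences[OF assms] by blast
  have "length x + p \<in> occurrences w ?z" "length x + q \<in> occurrences w ?z"
    using pq by (auto intro: occurrences_append_left occurrences_append_right)
  then have "card {length x + p, length x + q} \<le> card (occurrences w ?z)"
    by (intro card_mono finite_occurrences) auto
  then have twice: "2 \<le> card (occurrences w ?z)"
    using pq(1) by simp
  obtain r where r: "r \<in> occurrences (w @ [b]) y"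
    using assms unfolding right_special_def occurs_def by blast
  then have "r + length (w @ [b]) < length (y @ [d])"
    by (simp add: occurrences_def)
  then have "r \<in> occurrences ((w @ [b]) @ [(y @ [d]) ! (r + length (w @ [b]))]) (y @ [d])"
    using r by (intro occurrences_snoc_nth occurrences_append_right)
  then have "occurs (w @ [b, (y @ [d]) ! (r + length (w @ [b]))]) ?z"
    unfolding occurs_def using occurrences_append_left by fastforce
  then show ?thesis
    using twice unfolding ppm_contexts_def by blast
qed

theorem lemma2:
  fixes n :: nat
  assumes "n \<ge> 2"
  shows "\<forall>w. length w = n \<longrightarrow>
           w \<in> ppm_contexts (S_prefix n @ take (2 ^ n + n) (S_blk n))"
proof (intro allI impI)
  fix v :: "bool list"
  assume len_v: "length v = n"
  obtain c where c: "take (2 ^ n + n) (S_blk n) = db n @ take (n - 1) (db n) @ [c]"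
    using take_S_blk[OF assms] by blast
  have "right_special (butlast v) (db n @ take (n - 1) (db n))"
    unfolding right_special_def using db_cyclic_complete[of n] len_v assms by simp
  then have "butlast v @ [last v] \<in> ppm_contexts (S_prefix n @ (db n @ take (n - 1) (db n)) @ [c])"
    by (rule right_special_ppm_contexts)
  moreover have "v = butlast v @ [last v]"
    using len_v assms by (intro append_butlast_last_id[symmetric]) auto
  ultimately show "v \<in> ppm_contexts (S_prefix n @ take (2 ^ n + n) (S_blk n))"
    using c by simp
qed

end
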